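(* Let $G$ be the $m\times n$ square lattice graph $P_m\times P_n$ with $m,n>2$ and $\{m,n\}\notin\{\{3,3\},\{3,5\},\{4,4\}\}$. Then $T_1(G)=4$.
   Context: $P_m\times P_n$ is the Cartesian product of paths on $m$ and $n$ vertices. Fix a set $\Sigma$ of symbols (bond-edge types) and a disjoint copy $\hat\Sigma=\{\hat a:a\in\Sigma\}$ with $\hat{\hat a}=a$; elements of $\Sigma\cup\hat\Sigma$ are cohesive-end types. A tile is a finite multiset of cohesive-end types. A pot is a finite set $P$ of tiles such that whenever $x$ occurs in a tile of $P$, $\hat x$ occurs in some tile of $P$; $\#P$ is its number of tiles. Graphs are finite, loops and multiple edges allowed. An assembly design of a graph $H$ labels the half-edges of $H$ by cohesive-end types so that the two half-edges of each edge receive complementary labels $x,\hat x$; $t_v$ is the multiset of labels at $v$, $P_\lambda(H)=\{t_v\}$, and $P$ realizes $H$ ($H\in\mathcal{O}(P)$) if some assembly design $\lambda$ has $P_\lambda(H)\subseteq P$. $T_1(G)=\min\{\#P: G\in\mathcal{O}(P)\}$. *)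

theory Defs
  imports Main "HOL-Library.Multiset"
begin

datatype 'a cet = Sym 'a | Hat 'a

fun comp :: "'a cet \<Rightarrow> 'a cet" where
  "comp (Sym a) = Hat a"
| "comp (Hat a) = Sym a"

type_synonym 'a tile = "'a cet multiset"

definition pot :: "'a tile set \<Rightarrow> bool" where
  "pot P \<longleftrightarrow> finite P \<and> (\<forall>t\<in>P. \<forall>x. x \<in># t \<longrightarrow> (\<exists>t'\<in>P. comp x \<in># t'))"

text \<open>A finite multigraph (loops and multiple edges allowed): vertex set V, edge set E,
  and each edge e has endpoints ends e = (u,v). Its half-edges are (e,False) at u and (e,True) at v.\<close>
definition multigraph :: "'v set \<Rightarrow> 'e set \<Rightarrow> ('e \<Rightarrow> 'v \<times> 'v) \<Rightarrow> bool" where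
  "multigraph V E ends \<longleftrightarrow> finite V \<and> finite E \<and> (\<forall>e\<in>E. fst (ends e) \<in> V \<and> snd (ends e) \<in> V)"

definition assembly_design :: "'e set \<Rightarrow> ('e \<times> bool \<Rightarrow> 'a cet) \<Rightarrow> bool" where
  "assembly_design E lam \<longleftrightarrow> (\<forall>e\<in>E. lam (e, True) = comp (lam (e, False)))"

definition tile_at :: "'e set \<Rightarrow> ('e \<Rightarrow> 'v \<times> 'v) \<Rightarrow> ('e \<times> bool \<Rightarrow> 'a cet) \<Rightarrow> 'v \<Rightarrow> 'a tile" where
  "tile_at E ends lam v =
     (\<Sum>e\<in>E. (if fst (ends e) = v then {#lam (e, False)#} else {#})
            + (if snd (ends e) = v then {#lam (e, True)#} else {#}))"

definition pot_of_design :: "'v set \<Rightarrow> 'e set \<Rightarrow> ('e \<Rightarrow> 'v \<times> 'v) \<Rightarrow> ('e \<times> bool \<Rightarrow> 'a cet) \<Rightarrow> 'a tile set" where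
  "pot_of_design V E ends lam = tile_at E ends lam ` V"

definition realizes :: "'a tile set \<Rightarrow> 'v set \<Rightarrow> 'e set \<Rightarrow> ('e \<Rightarrow> 'v \<times> 'v) \<Rightarrow> bool" where
  "realizes P V E ends \<longleftrightarrow>
     (\<exists>lam. assembly_design E lam \<and> pot_of_design V E ends lam \<subseteq> P)"

text \<open>T_1(G): minimum number of tiles of a pot realizing G (symbol set \<Sigma> = nat,
  which suffices since any finite design uses finitely many symbols).\<close>
definition T1 :: "'v set \<Rightarrow> 'e set \<Rightarrow> ('e \<Rightarrow> 'v \<times> 'v) \<Rightarrow> nat" where
  "T1 V E ends = Inf {card P | P :: nat tile set. pot P \<and> realizes P V E ends}"

definition grid_V :: "nat \<Rightarrow> nat \<Rightarrow> (nat \<times> nat) set" where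
  "grid_V m n = {0..<m} \<times> {0..<n}"

definition grid_E :: "nat \<Rightarrow> nat \<Rightarrow> ((nat \<times> nat) \<times> (nat \<times> nat)) set" where
  "grid_E m n = {((i,j),(i',j')). (i,j) \<in> grid_V m n \<and> (i',j') \<in> grid_V m n \<and>
                  ((i' = Suc i \<and> j' = j) \<or> (i' = i \<and> j' = Suc j))}"

end

theory Submission
  imports Defs
begin

(* Four tiles suffice: one bond type runs once around the border cycle and a second one labels
   all remaining edges. Conversely, a pot of at most three tiles must consist of exactly one tile
   for each degree 2, 3, 4 (corner, border, interior). Count Sym ends as +1 and Hat ends as -1:
   the total charge of the tiles on a vertex set U is bounded in absolute value by the number of
   edges leaving U, and vanishes for the whole grid. For the whole grid, the interior, the first
   column and the first row this gives, with p = m - 2, q = n - 2 and tile charges a, b, c,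
     4a + 2(p + q)b + pqc = 0,  |pqc| <= 2(p + q),  |2a + pb| <= p + 2,  |2a + qb| <= q + 2,
   and with |a| <= 2, b odd, c even only (p, q) in {(1,1), (1,3), (3,1), (2,2)} survive. *)

fun cet_sign :: "'a cet \<Rightarrow> int" where
  "cet_sign (Sym a) = 1"
| "cet_sign (Hat a) = -1"

lemma cet_sign_comp [simp]: "cet_sign (comp x) = - cet_sign x"
  by (cases x) auto

lemma abs_cet_sign [simp]: "\<bar>cet_sign x\<bar> = 1"
  by (cases x) auto

definition charge :: "'a tile \<Rightarrow> int" where
  "charge t = (\<Sum>x\<in>#t. cet_sign x)"

lemma charge_empty [simp]: "charge {#} = 0"
  by (simp add: charge_def)

lemma charge_add_mset [simp]: "charge (add_mset x t) = cet_sign x + charge t"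
  by (simp add: charge_def)

lemma charge_union [simp]: "charge (s + t) = charge s + charge t"
  by (simp add: charge_def)

lemma charge_sum: "charge (sum f A) = (\<Sum>a\<in>A. charge (f a))"
  by (induction A rule: infinite_finite_induct) auto

lemma abs_charge_le_size: "\<bar>charge t\<bar> \<le> int (size t)"
proof (induction t)
  case (add x t)
  then show ?case
    using abs_triangle_ineq[of "cet_sign x" "charge t"] by simp
qed simp

lemma even_charge_plus_size: "even (charge t + int (size t))"
proof (induction t)
  case (add x t)
  have "cet_sign x = 1 \<or> cet_sign x = -1"
    by (cases x) auto
  with add show ?case
    by auto
qed simp

definition cut_edges :: "'e set \<Rightarrow> ('e \<Rightarrow> 'v \<times> 'v) \<Rightarrow> 'v set \<Rightarrow> 'e set" where
  "cut_edges E ends U = {e \<in> E. (fst (ends e) \<in> U) \<noteq> (snd (ends e) \<in> U)}"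

lemma sum_charge_tile_at:
  assumes "assembly_design E lam" "finite E" "finite U"
  shows "(\<Sum>v\<in>U. charge (tile_at E ends lam v)) =
    (\<Sum>e\<in>cut_edges E ends U.
       (of_bool (fst (ends e) \<in> U) - of_bool (snd (ends e) \<in> U)) * cet_sign (lam (e, False)))"
proof -
  let ?s = "\<lambda>e. cet_sign (lam (e, False))"
  let ?flux = "\<lambda>e. (of_bool (fst (ends e) \<in> U) - of_bool (snd (ends e) \<in> U)) * ?s e"
  have "(\<Sum>v\<in>U. charge (tile_at E ends lam v)) =
    (\<Sum>v\<in>U. \<Sum>e\<in>E. (if fst (ends e) = v then ?s e else 0) - (if snd (ends e) = v then ?s e else 0))"
    unfolding tile_at_def charge_sum
    using assms(1) by (intro sum.cong refl) (auto simp: assembly_design_def)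
  also have "\<dots> = (\<Sum>e\<in>E. ?flux e)"
    using assms(3) by (subst sum.swap)
      (auto simp: sum_subtractf left_diff_distrib intro!: arg_cong2[where f = minus] sum.cong)
  also have "\<dots> = (\<Sum>e\<in>cut_edges E ends U. ?flux e)"
    using assms(2) by (intro sum.mono_neutral_right) (auto simp: cut_edges_def)
  finally show ?thesis .
qed

lemma abs_sum_charge_le_card_cut:
  assumes "assembly_design E lam" "finite E" "finite U"
  shows "\<bar>\<Sum>v\<in>U. charge (tile_at E ends lam v)\<bar> \<le> int (card (cut_edges E ends U))"
proof -
  let ?C = "cut_edges E ends U"
  have "\<bar>\<Sum>e\<in>?C. (of_bool (fst (ends e) \<in> U) - of_bool (snd (ends e) \<in> U)) * cet_sign (lam (e, False))\<bar>
    \<le> (\<Sum>e\<in>?C. \<bar>(of_bool (fst (ends e) \<in> U) - of_bool (snd (ends e) \<in> U)) * cet_sign (lam (e, False))\<bar>)"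
    by (rule sum_abs)
  also have "\<dots> \<le> (\<Sum>e\<in>?C. 1)"
    by (intro sum_mono) (auto simp: abs_mult)
  finally show ?thesis
    by (simp add: sum_charge_tile_at[OF assms])
qed

lemma finite_grid_V: "finite (grid_V m n)"
  by (simp add: grid_V_def)

lemma finite_grid_E: "finite (grid_E m n)"
proof (rule finite_subset)
  show "grid_E m n \<subseteq> grid_V m n \<times> grid_V m n"
    by (auto simp: grid_E_def)
qed (simp add: finite_grid_V)

lemma tile_at_eq_sum_out_in:
  assumes "finite E"
  shows "tile_at E ends lam v =
    (\<Sum>e\<in>{e \<in> E. fst (ends e) = v}. {#lam (e, False)#}) +
    (\<Sum>e\<in>{e \<in> E. snd (ends e) = v}. {#lam (e, True)#})"
  using assms by (simp add: tile_at_def sum.distrib sum.inter_filter)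

lemma grid_edges_from:
  "{e \<in> grid_E m n. fst e = (i, j)} =
     (if Suc i < m \<and> j < n then {((i, j), (Suc i, j))} else {}) \<union>
     (if i < m \<and> Suc j < n then {((i, j), (i, Suc j))} else {})"
  by (auto simp: grid_E_def grid_V_def)

lemma grid_edges_to:
  "{e \<in> grid_E m n. snd e = (i, j)} =
     (if 0 < i \<and> i < m \<and> j < n then {((i - 1, j), (i, j))} else {}) \<union>
     (if 0 < j \<and> i < m \<and> j < n then {((i, j - 1), (i, j))} else {})"
  by (auto simp: grid_E_def grid_V_def gr0_conv_Suc)

lemma tile_at_grid:
  "tile_at (grid_E m n) id lam (i, j) =
     (if Suc i < m \<and> j < n then {#lam (((i, j), (Suc i, j)), False)#} else {#}) +
     (if i < m \<and> Suc j < n then {#lam (((i, j), (i, Suc j)), False)#} else {#}) +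
     (if 0 < i \<and> i < m \<and> j < n then {#lam (((i - 1, j), (i, j)), True)#} else {#}) +
     (if 0 < j \<and> i < m \<and> j < n then {#lam (((i, j - 1), (i, j)), True)#} else {#})"
  unfolding tile_at_eq_sum_out_in[OF finite_grid_E] id_apply grid_edges_from grid_edges_to
  by (auto simp: sum.union_disjoint)

definition on_border :: "nat \<Rightarrow> nat \<Rightarrow> bool" where
  "on_border m i \<longleftrightarrow> i = 0 \<or> i = m - 1"

lemma on_border_0 [simp]: "on_border m 0"
  by (simp add: on_border_def)

definition border_count :: "nat \<Rightarrow> nat \<Rightarrow> nat \<times> nat \<Rightarrow> nat" where
  "border_count m n v = of_bool (on_border m (fst v)) + of_bool (on_border n (snd v))"

lemma size_tile_at_grid:
  assumes "i < m" "j < n" "1 < m" "1 < n"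
  shows "size (tile_at (grid_E m n) id lam (i, j)) = 4 - border_count m n (i, j)"
  using assms by (auto simp: tile_at_grid border_count_def on_border_def)

lemma sum_on_border:
  fixes g :: "bool \<Rightarrow> int"
  assumes "1 < n"
  shows "(\<Sum>j\<in>{0..<n}. g (on_border n j)) = 2 * g True + (int n - 2) * g False"
proof -
  have "{0..<n} = {0, n - 1} \<union> {1..<n - 1}" "{0, n - 1} \<inter> {1..<n - 1} = {}"
    using assms by auto
  then have "(\<Sum>j\<in>{0..<n}. g (on_border n j)) =
      (\<Sum>j\<in>{0, n - 1}. g (on_border n j)) + (\<Sum>j\<in>{1..<n - 1}. g (on_border n j))"
    by (metis finite.emptyI finite.insertI finite_atLeastLessThan sum.union_disjoint)
  also have "\<dots> = 2 * g True + (\<Sum>j\<in>{1..<n - 1}. g False)"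
    using assms by (auto simp: on_border_def intro!: sum.cong)
  finally show ?thesis
    using assms by (simp add: of_nat_diff)
qed

lemma sum_border_count_grid:
  fixes w :: "nat \<Rightarrow> int"
  assumes "1 < m" "1 < n"
  shows "(\<Sum>v\<in>grid_V m n. w (border_count m n v)) =
    4 * w 2 + 2 * ((int m - 2) + (int n - 2)) * w 1 + (int m - 2) * (int n - 2) * w 0"
proof -
  have "(\<Sum>v\<in>grid_V m n. w (border_count m n v)) =
      (\<Sum>i\<in>{0..<m}. \<Sum>j\<in>{0..<n}. w (of_bool (on_border m i) + of_bool (on_border n j)))"
    by (simp add: grid_V_def border_count_def sum.cartesian_product')
  also have "\<dots> = (\<Sum>i\<in>{0..<m}.
      2 * w (of_bool (on_border m i) + 1) + (int n - 2) * w (of_bool (on_border m i)))"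
  proof (rule sum.cong[OF refl])
    fix i
    show "(\<Sum>j\<in>{0..<n}. w (of_bool (on_border m i) + of_bool (on_border n j))) =
        2 * w (of_bool (on_border m i) + 1) + (int n - 2) * w (of_bool (on_border m i))"
      using sum_on_border[OF assms(2), of "\<lambda>b. w (of_bool (on_border m i) + of_bool b)"] by simp
  qed
  also have "\<dots> = 2 * (2 * w 2 + (int n - 2) * w 1) + (int m - 2) * (2 * w 1 + (int n - 2) * w 0)"
    using sum_on_border[OF assms(1), of "\<lambda>b. 2 * w (of_bool b + 1) + (int n - 2) * w (of_bool b)"]
    by (simp add: numeral_2_eq_2)
  finally show ?thesis
    by (simp add: algebra_simps)
qed

lemma sum_border_count_interior:
  fixes w :: "nat \<Rightarrow> int"
  assumes "1 < m" "1 < n"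
  shows "(\<Sum>v\<in>{1..<m - 1} \<times> {1..<n - 1}. w (border_count m n v)) = (int m - 2) * (int n - 2) * w 0"
proof -
  have "(\<Sum>v\<in>{1..<m - 1} \<times> {1..<n - 1}. w (border_count m n v)) = (\<Sum>v\<in>{1..<m - 1} \<times> {1..<n - 1}. w 0)"
    by (intro sum.cong) (auto simp: border_count_def on_border_def)
  then show ?thesis
    using assms by (simp add: of_nat_diff)
qed

lemma sum_border_count_first_column:
  fixes w :: "nat \<Rightarrow> int"
  assumes "1 < m"
  shows "(\<Sum>v\<in>{0..<m} \<times> {0}. w (border_count m n v)) = 2 * w 2 + (int m - 2) * w 1"
  using sum_on_border[OF assms, of "\<lambda>b. w (of_bool b + 1)"]
  by (simp add: sum.cartesian_product' border_count_def numeral_2_eq_2)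

lemma sum_border_count_first_row:
  fixes w :: "nat \<Rightarrow> int"
  assumes "1 < n"
  shows "(\<Sum>v\<in>{0} \<times> {0..<n}. w (border_count m n v)) = 2 * w 2 + (int n - 2) * w 1"
  using sum_on_border[OF assms, of "\<lambda>b. w (1 + of_bool b)"]
  by (simp add: sum.cartesian_product' border_count_def numeral_2_eq_2)

lemma card_cut_edges_grid_rectangle:
  "card (cut_edges (grid_E m n) id ({i0..<i1} \<times> {j0..<j1})) \<le>
     (j1 - j0) * (of_bool (0 < i0) + of_bool (i1 < m)) +
     (i1 - i0) * (of_bool (0 < j0) + of_bool (j1 < n))"
proof -
  have card_side: "card (if b then f ` A else {}) \<le> of_bool b * card A"
    if "finite A" for b and f :: "nat \<Rightarrow> 'a" and A
    using that
    by (simp add: card_image_le)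
  have "cut_edges (grid_E m n) id ({i0..<i1} \<times> {j0..<j1}) \<subseteq>
      ((if 0 < i0 then (\<lambda>j. ((i0 - 1, j), (i0, j))) ` {j0..<j1} else {}) \<union>
       (if i1 < m then (\<lambda>j. ((i1 - 1, j), (i1, j))) ` {j0..<j1} else {})) \<union>
      ((if 0 < j0 then (\<lambda>i. ((i, j0 - 1), (i, j0))) ` {i0..<i1} else {}) \<union>
       (if j1 < n then (\<lambda>i. ((i, j1 - 1), (i, j1))) ` {i0..<i1} else {}))"
    by (auto simp: cut_edges_def grid_E_def grid_V_def image_iff)
  then have "card (cut_edges (grid_E m n) id ({i0..<i1} \<times> {j0..<j1})) \<le> card \<dots>"
    by (intro card_mono) auto
  also have "\<dots> \<le> of_bool (0 < i0) * (j1 - j0) + of_bool (i1 < m) * (j1 - j0) +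
      (of_bool (0 < j0) * (i1 - i0) + of_bool (j1 < n) * (i1 - i0))"
    by (intro card_Un_le[THEN order_trans] add_mono card_side[THEN order_trans]) auto
  finally show ?thesis
    by (simp add: algebra_simps)
qed

(* Label 1 runs once around the border cycle in a consistent direction; every other edge
   carries label 0, with Sym 0 at its endpoint nearer to the corner (0, 0). *)
definition border_cycle_label :: "nat \<Rightarrow> nat \<Rightarrow> (nat \<times> nat) \<times> (nat \<times> nat) \<Rightarrow> nat cet" where
  "border_cycle_label m n e = (case e of ((i, j), (i', j')) \<Rightarrow>
     if i = 0 \<and> i' = 0 \<or> j = n - 1 \<and> j' = n - 1 then Sym 1
     else if i = m - 1 \<and> i' = m - 1 \<or> j = 0 \<and> j' = 0 then Hat 1
     else Sym 0)"

definition border_cycle_design ::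
    "nat \<Rightarrow> nat \<Rightarrow> ((nat \<times> nat) \<times> (nat \<times> nat)) \<times> bool \<Rightarrow> nat cet" where
  "border_cycle_design m n h =
     (if snd h then comp (border_cycle_label m n (fst h)) else border_cycle_label m n (fst h))"

definition grid_pot :: "nat tile set" where
  "grid_pot = {{#Sym 1, Hat 1#}, {#Sym 0, Sym 1, Hat 1#}, {#Hat 0, Sym 1, Hat 1#},
               {#Sym 0, Sym 0, Hat 0, Hat 0#}}"

lemma card_grid_pot: "card grid_pot = 4"
  unfolding grid_pot_def
  by (auto simp: card_insert_if
      dest: arg_cong[where f = "\<lambda>M. count M (Sym 0)"] arg_cong[where f = size])

lemma pot_grid_pot: "pot grid_pot"
  unfolding pot_def grid_pot_def by auto

lemma realizes_grid_pot:
  assumes "2 < m" "2 < n"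
  shows "realizes grid_pot (grid_V m n) (grid_E m n) id"
  unfolding realizes_def
proof (intro exI conjI)
  show "assembly_design (grid_E m n) (border_cycle_design m n)"
    by (simp add: assembly_design_def border_cycle_design_def)
  show "pot_of_design (grid_V m n) (grid_E m n) id (border_cycle_design m n) \<subseteq> grid_pot"
  proof
    fix t
    assume "t \<in> pot_of_design (grid_V m n) (grid_E m n) id (border_cycle_design m n)"
    then obtain i j where ij: "i < m" "j < n"
      and t: "t = tile_at (grid_E m n) id (border_cycle_design m n) (i, j)"
      by (auto simp: pot_of_design_def grid_V_def)
    show "t \<in> grid_pot"
      unfolding t tile_at_grid border_cycle_design_def border_cycle_label_def grid_pot_def
      using ij assms by (auto simp: add_mset_commute)
  qed
qed

lemma charge_constraints_unit_side:
  fixes q a b c :: int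
  assumes "1 \<le> q" "odd b" "even c"
    and balance: "4 * a + 2 * (1 + q) * b + q * c = 0"
    and side: "\<bar>2 * a + b\<bar> \<le> 3"
  shows "q = 1 \<or> q = 3"
proof -
  define A D where "A = 2 * a + b" and "D = 2 * b + c"
  have "2 * A = - (q * D)"
    using balance by (simp add: A_def D_def algebra_simps)
  then have "\<bar>q * D\<bar> = \<bar>2 * A\<bar>"
    by simp
  then have qD: "q * \<bar>D\<bar> = 2 * \<bar>A\<bar>"
    using \<open>1 \<le> q\<close> by (simp add: abs_mult)
  have "odd A" "even D"
    using assms by (simp_all add: A_def D_def)
  then have "D \<noteq> 0"
    using \<open>2 * A = - (q * D)\<close> by auto
  with \<open>even D\<close> have "2 \<le> \<bar>D\<bar>"
    by presburger
  have "q * 2 \<le> q * \<bar>D\<bar>"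
    using \<open>2 \<le> \<bar>D\<bar>\<close> \<open>1 \<le> q\<close> by (intro mult_left_mono) auto
  also have "\<dots> \<le> 6"
    using qD side by (simp add: A_def)
  finally have "q \<le> 3"
    by simp
  moreover have "odd q"
  proof
    assume "even q"
    with \<open>even D\<close> have "2 * 2 dvd q * \<bar>D\<bar>"
      using mult_dvd_mono[of 2 q 2 "\<bar>D\<bar>"] by simp
    with qD \<open>odd A\<close> show False
      by presburger
  qed
  ultimately show ?thesis
    using \<open>1 \<le> q\<close> by presburger
qed

lemma grid_charge_constraints_solutions:
  fixes p q a b c :: int
  assumes "1 \<le> p" "1 \<le> q" "\<bar>a\<bar> \<le> 2" "odd b" "even c"
    and balance: "4 * a + 2 * (p + q) * b + p * q * c = 0"
    and interior: "\<bar>p * q * c\<bar> \<le> 2 * (p + q)"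
    and column: "\<bar>2 * a + p * b\<bar> \<le> p + 2"
    and row: "\<bar>2 * a + q * b\<bar> \<le> q + 2"
  shows "(p, q) \<in> {(1, 1), (1, 3), (3, 1), (2, 2)}"
proof (cases "c = 0")
  case True
  then have "(p + q) * b = - (2 * a)"
    using balance by (simp add: algebra_simps)
  then have "even (p + q)"
    using \<open>odd b\<close> by (metis dvd_minus_iff dvd_triv_left even_mult_iff)
  have "b \<noteq> 0"
    using \<open>odd b\<close> by auto
  then have "(p + q) * 1 \<le> (p + q) * \<bar>b\<bar>"
    using assms(1,2) by (intro mult_left_mono) auto
  also have "\<dots> = \<bar>(p + q) * b\<bar>"
    using assms(1,2) by (simp add: abs_mult)
  also have "\<dots> = 2 * \<bar>a\<bar>"
    using \<open>(p + q) * b = - (2 * a)\<close> by (simp add: abs_mult)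
  finally have "p + q \<le> 4"
    using \<open>\<bar>a\<bar> \<le> 2\<close> by simp
  with \<open>even (p + q)\<close> assms(1,2) show ?thesis
    by (simp only: insert_iff empty_iff prod.inject) presburger
next
  case False
  with \<open>even c\<close> have "2 \<le> \<bar>c\<bar>"
    by presburger
  then have "p * q * 2 \<le> \<bar>p * q * c\<bar>"
    using assms(1,2) by (simp add: abs_mult mult_left_mono)
  with interior have "(p - 1) * (q - 1) \<le> 1"
    by (simp add: algebra_simps)
  then consider "p = 1" | "q = 1" | "p = 2" "q = 2"
    using assms(1,2) mult_mono[of 1 "p - 1" 1 "q - 1"] pos_zmult_eq_1_iff[of "p - 1" "q - 1"]
    by fastforce
  then show ?thesis
  proof cases
    case 1
    then have "q = 1 \<or> q = 3"
      using charge_constraints_unit_side[of q b c a] assms column by simp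
    with 1 show ?thesis
      by auto
  next
    case 2
    then have "p = 1 \<or> p = 3"
      using charge_constraints_unit_side[of p b c a] assms row by (simp add: algebra_simps)
    with 2 show ?thesis
      by auto
  qed simp
qed

lemma grid_tiles_determined_by_border_count:
  assumes "2 < m" "2 < n" "finite P" "card P \<le> 3"
    and "pot_of_design (grid_V m n) (grid_E m n) id lam \<subseteq> P"
  obtains T where "\<And>k. k \<le> 2 \<Longrightarrow> size (T k) = 4 - k"
    and "\<And>v. v \<in> grid_V m n \<Longrightarrow> tile_at (grid_E m n) id lam v = T (border_count m n v)"
proof -
  let ?t = "tile_at (grid_E m n) id lam"
  define T where "T k = ?t (if k = (0::nat) then (1, 1) else if k = 1 then (0, 1) else (0, 0))" for k
  have t_in_P: "?t v \<in> P" if "v \<in> grid_V m n" for v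
    using assms(5) that by (auto simp: pot_of_design_def)
  have size_t: "size (?t v) = 4 - border_count m n v" if "v \<in> grid_V m n" for v
    using that assms(1,2) size_tile_at_grid[of "fst v" m "snd v" n lam] by (auto simp: grid_V_def)
  have size_T: "size (T k) = 4 - k" if "k \<le> 2" for k
    using that assms(1,2) size_t
    by (auto simp: T_def grid_V_def border_count_def on_border_def le_Suc_eq numeral_2_eq_2)
  have "T ` {0, 1, 2} \<subseteq> P"
    using assms(1,2) t_in_P by (auto simp: T_def grid_V_def)
  moreover have "card (T ` {0, 1, 2}) = 3"
  proof -
    have "T 0 \<noteq> T 1" "T 0 \<noteq> T 2" "T 1 \<noteq> T 2"
      using size_T[of 0] size_T[of 1] size_T[of 2] by force+
    then show ?thesis
      by simp
  qed
  ultimately have P_eq: "P = T ` {0, 1, 2}"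
    using assms(3,4) by (metis card_seteq)
  show thesis
  proof
    show "size (T k) = 4 - k" if "k \<le> 2" for k
      using that by (rule size_T)
    show "?t v = T (border_count m n v)" if v: "v \<in> grid_V m n" for v
    proof -
      obtain k where "k \<in> {0, 1, 2}" and t_eq: "?t v = T k"
        using t_in_P[OF v] P_eq by blast
      then have "k \<le> 2"
        by auto
      moreover have "border_count m n v \<le> 2"
        by (simp add: border_count_def)
      ultimately have "k = border_count m n v"
        using size_t[OF v] size_T[of k] t_eq by simp
      with t_eq show ?thesis
        by simp
    qed
  qed
qed

lemma grid_realized_by_three_tiles_exceptional:
  assumes "2 < m" "2 < n" "finite P" "card P \<le> 3"
    and "realizes P (grid_V m n) (grid_E m n) id"
  shows "(m, n) \<in> {(3, 3), (3, 5), (5, 3), (4, 4)}"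
proof -
  obtain lam where design: "assembly_design (grid_E m n) lam"
    and sub: "pot_of_design (grid_V m n) (grid_E m n) id lam \<subseteq> P"
    using assms(5) by (auto simp: realizes_def)
  obtain T where size_T: "\<And>k. k \<le> 2 \<Longrightarrow> size (T k) = 4 - k"
    and tile_eq: "\<And>v. v \<in> grid_V m n \<Longrightarrow> tile_at (grid_E m n) id lam v = T (border_count m n v)"
    using grid_tiles_determined_by_border_count[OF assms(1-4) sub] by blast
  define w where "w k = charge (T k)" for k
  have flux: "\<bar>\<Sum>v\<in>R. w (border_count m n v)\<bar> \<le> int (card (cut_edges (grid_E m n) id R))"
    if "R \<subseteq> grid_V m n" for R
  proof -
    have "finite R"
      using that finite_grid_V finite_subset by blast
    have "(\<Sum>v\<in>R. w (border_count m n v)) = (\<Sum>v\<in>R. charge (tile_at (grid_E m n) id lam v))"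
      using that tile_eq by (auto simp: w_def intro!: sum.cong)
    then show ?thesis
      using abs_sum_charge_le_card_cut[OF design finite_grid_E \<open>finite R\<close>] by simp
  qed
  have balance: "4 * w 2 + 2 * ((int m - 2) + (int n - 2)) * w 1 + (int m - 2) * (int n - 2) * w 0 = 0"
    using flux[of "grid_V m n"] card_cut_edges_grid_rectangle[of m n 0 m 0 n]
      sum_border_count_grid[of m n w] assms(1,2) by (simp add: grid_V_def)
  have interior_sub: "{1..<m - 1} \<times> {1..<n - 1} \<subseteq> grid_V m n"
    by (auto simp: grid_V_def)
  have interior: "\<bar>(int m - 2) * (int n - 2) * w 0\<bar> \<le> 2 * ((int m - 2) + (int n - 2))"
    using flux[OF interior_sub] card_cut_edges_grid_rectangle[of m n 1 "m - 1" 1 "n - 1"]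
      sum_border_count_interior[of m n w] assms(1,2) by (simp add: of_nat_diff)
  have column_sub: "{0..<m} \<times> {0} \<subseteq> grid_V m n" and row_sub: "{0} \<times> {0..<n} \<subseteq> grid_V m n"
    using assms(1,2) by (auto simp: grid_V_def)
  have column: "\<bar>2 * w 2 + (int m - 2) * w 1\<bar> \<le> (int m - 2) + 2"
    using flux[OF column_sub] card_cut_edges_grid_rectangle[of m n 0 m 0 1]
      sum_border_count_first_column[where m = m and n = n and w = w] assms(1,2) by (simp add: grid_V_def)
  have row: "\<bar>2 * w 2 + (int n - 2) * w 1\<bar> \<le> (int n - 2) + 2"
    using flux[OF row_sub] card_cut_edges_grid_rectangle[of m n 0 1 0 n]
      sum_border_count_first_row[where m = m and n = n and w = w] assms(1,2) by (simp add: grid_V_def)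
  have "\<bar>w 2\<bar> \<le> 2" "odd (w 1)" "even (w 0)"
    using abs_charge_le_size[of "T 2"] even_charge_plus_size[of "T 1"] even_charge_plus_size[of "T 0"]
      size_T[of 0] size_T[of 1] size_T[of 2] by (simp_all add: w_def)
  then have "(int m - 2, int n - 2) \<in> {(1, 1), (1, 3), (3, 1), (2, 2)}"
    using assms(1,2) balance interior column row by (intro grid_charge_constraints_solutions) auto
  then show ?thesis
    by auto
qed

theorem proposition5:
  fixes m n :: nat
  assumes "m > 2" and "n > 2"
    and "{m, n} \<notin> {{3,3}, {3,5}, {4,4}}"
  shows "T1 (grid_V m n) (grid_E m n) id = 4"
  unfolding T1_def
proof (rule cInf_eq_minimum)
  show "4 \<in> {card P |P :: nat tile set. pot P \<and> realizes P (grid_V m n) (grid_E m n) id}"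
    using card_grid_pot pot_grid_pot realizes_grid_pot[OF assms(1,2)] by force
next
  fix k
  assume "k \<in> {card P |P :: nat tile set. pot P \<and> realizes P (grid_V m n) (grid_E m n) id}"
  then obtain P :: "nat tile set" where "k = card P" "finite P" "realizes P (grid_V m n) (grid_E m n) id"
    by (auto simp: pot_def)
  show "4 \<le> k"
  proof (rule ccontr)
    assume "\<not> 4 \<le> k"
    with \<open>k = card P\<close> have "card P \<le> 3"
      by simp
    with \<open>finite P\<close> \<open>realizes P (grid_V m n) (grid_E m n) id\<close>
    have "(m, n) \<in> {(3, 3), (3, 5), (5, 3), (4, 4)}"
      using grid_realized_by_three_tiles_exceptional[OF assms(1,2)] by blast
    with assms(3) show False
      by (auto simp: insert_commute)
  qed
qed

end
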